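(* Let $N\ge 1$, let $f:Z[1,N]\times\mathbb{R}\to\mathbb{R}$ be continuous in its second variable for every $k\in Z[1,N]$, and let $p:Z[1,N+2]\to\mathbb{R}$, $q:Z[1,N+1]\to\mathbb{R}$. Assume that (1) there exists $m>0$ such that $s f(k,s)\ge 0$ for all $|s|\ge m$ and $k\in Z[1,N]$; (2) $\eta'(p)\,p_{\min}-\eta(q)\,q_{\max}>0$. Then the functional $J$ is coercive on $E$ and the boundary value problem $$\Delta^2\big(p(k)\Delta^2 y(k-2)\big)+\Delta\big(q(k)\Delta y(k-1)\big)+f(k,y(k))=0\ \ (k\in Z[1,N]),\qquad y(-1)=y(0)=y(N+1)=y(N+2)=0$$ has at least one solution. Moreover, if there exists $k_0\in Z[1,N]$ with $f(k_0,0)\ne 0$, this solution is non-zero.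
   Context: $Z[a,b]=[a,b]\cap\mathbb{Z}$; $\Delta x(k)=x(k+1)-x(k)$, $\Delta^2=\Delta\circ\Delta$; $\Delta^2(p(k)\Delta^2y(k-2))$ means $\Delta^2$ applied to $k\mapsto p(k)\Delta^2 y(k-2)$, similarly for $\Delta(q(k)\Delta y(k-1))$. A solution is a function $y:Z[-1,N+2]\to\mathbb{R}$ satisfying the equation and boundary conditions. $E=\{y:Z[-1,N+2]\to\mathbb{R}\mid y(-1)=y(0)=y(N+1)=y(N+2)=0\}$ with norm $\|y\|=(\sum_{k=1}^N y(k)^2)^{1/2}$; $F(k,s)=\int_0^s f(k,t)dt$; $J(y)=\sum_{k=1}^{N+2}\frac{p(k)}{2}(\Delta^2 y(k-2))^2-\sum_{k=1}^{N+1}\frac{q(k)}{2}(\Delta y(k-1))^2+\sum_{k=1}^N F(k,y(k))$. $J$ is coercive if $J(y)\to+\infty$ as $\|y\|\to\infty$. $p_{\min}=\min_{Z[1,N+2]}p$, $p_{\max}=\max_{Z[1,N+2]}p$, $q_{\min}=\min_{Z[1,N+1]}q$, $q_{\max}=\max_{Z[1,N+1]}q$. With $\tilde y=(y(1),\dots,y(N))^T$, let $V$ be the $(N+1)\times N$ matrix with $V\tilde y=(\Delta y(0),\dots,\Delta y(N))^T$ and $W$ the $(N+2)\times N$ matrix with $W\tilde y=(\Delta^2y(-1),\dots,\Delta^2y(N))^T$ for $y\in E$; $\lambda_1$, $\lambda_2$ are the smallest eigenvalues of $V^TV$ and $W^TW$ respectively. Define $\eta'(p)=\lambda_2$ if $p_{\min}\ge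 0$ and $\eta'(p)=16$ if $p_{\min}<0$; $\eta(q)=\lambda_1$ if $q_{\max}<0$ and $\eta(q)=4$ if $q_{\max}\ge 0$. *)

theory Defs
  imports "HOL-Analysis.Analysis" "Jordan_Normal_Form.Char_Poly"
begin

text \<open>Functions on integer intervals are modelled as functions int => real;
  only the values on the relevant interval matter.\<close>

definition fwd_diff :: "(int \<Rightarrow> real) \<Rightarrow> int \<Rightarrow> real" ("\<Delta>") where
  "\<Delta> x k = x (k + 1) - x k"

definition solution_set :: "nat \<Rightarrow> (int \<Rightarrow> real) set" where
  "solution_set N = {y. y (-1) = 0 \<and> y 0 = 0 \<and> y (int N + 1) = 0 \<and> y (int N + 2) = 0
      \<and> (\<forall>k. k < -1 \<or> k > int N + 2 \<longrightarrow> y k = 0)}"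

definition ynorm :: "nat \<Rightarrow> (int \<Rightarrow> real) \<Rightarrow> real" where
  "ynorm N y = sqrt (\<Sum>k=1..int N. (y k)\<^sup>2)"

definition Fprim :: "(int \<Rightarrow> real \<Rightarrow> real) \<Rightarrow> int \<Rightarrow> real \<Rightarrow> real" where
  "Fprim f k s = (if 0 \<le> s then integral {0..s} (f k) else - integral {s..0} (f k))"

definition Jfun :: "nat \<Rightarrow> (int \<Rightarrow> real) \<Rightarrow> (int \<Rightarrow> real) \<Rightarrow> (int \<Rightarrow> real \<Rightarrow> real)
    \<Rightarrow> (int \<Rightarrow> real) \<Rightarrow> real" where
  "Jfun N p q f y =
     (\<Sum>k=1..int N + 2. p k / 2 * (\<Delta> (\<Delta> y) (k - 2))\<^sup>2)
   - (\<Sum>k=1..int N + 1. q k / 2 * (\<Delta> y (k - 1))\<^sup>2)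
   + (\<Sum>k=1..int N. Fprim f k (y k))"

definition coercive_on :: "nat \<Rightarrow> ((int \<Rightarrow> real) \<Rightarrow> real) \<Rightarrow> bool" where
  "coercive_on N J = (\<forall>M. \<exists>R. \<forall>y \<in> solution_set N. ynorm N y > R \<longrightarrow> J y > M)"

text \<open>Matrix V ((N+1) x N): V ytilde = (Delta y(0), ..., Delta y(N)), ytilde_j = y(j+1).\<close>
definition Vmat :: "nat \<Rightarrow> real mat" where
  "Vmat N = mat (N + 1) N (\<lambda>(i, j).
      (if j = i then 1 else 0) - (if j + 1 = i then 1 else 0))"

text \<open>Matrix W ((N+2) x N): W ytilde = (Delta^2 y(-1), ..., Delta^2 y(N)).\<close>
definition Wmat :: "nat \<Rightarrow> real mat" where
  "Wmat N = mat (N + 2) N (\<lambda>(i, j).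
      (if j = i then 1 else 0) - 2 * (if j + 1 = i then 1 else 0) + (if j + 2 = i then 1 else 0))"

definition smallest_eigenvalue :: "real mat \<Rightarrow> real" where
  "smallest_eigenvalue A = Min {l. eigenvalue A l}"

definition lambda1 :: "nat \<Rightarrow> real" where
  "lambda1 N = smallest_eigenvalue (transpose_mat (Vmat N) * Vmat N)"

definition lambda2 :: "nat \<Rightarrow> real" where
  "lambda2 N = smallest_eigenvalue (transpose_mat (Wmat N) * Wmat N)"

definition pmin :: "nat \<Rightarrow> (int \<Rightarrow> real) \<Rightarrow> real" where
  "pmin N p = Min (p ` {1..int N + 2})"

definition qmax :: "nat \<Rightarrow> (int \<Rightarrow> real) \<Rightarrow> real" where
  "qmax N q = Max (q ` {1..int N + 1})"

definition eta' :: "nat \<Rightarrow> (int \<Rightarrow> real) \<Rightarrow> real" where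
  "eta' N p = (if pmin N p \<ge> 0 then lambda2 N else 16)"

definition eta :: "nat \<Rightarrow> (int \<Rightarrow> real) \<Rightarrow> real" where
  "eta N q = (if qmax N q < 0 then lambda1 N else 4)"

definition is_solution :: "nat \<Rightarrow> (int \<Rightarrow> real) \<Rightarrow> (int \<Rightarrow> real) \<Rightarrow> (int \<Rightarrow> real \<Rightarrow> real)
    \<Rightarrow> (int \<Rightarrow> real) \<Rightarrow> bool" where
  "is_solution N p q f y =
     ((\<forall>k \<in> {1..int N}.
        \<Delta> (\<Delta> (\<lambda>j. p j * \<Delta> (\<Delta> y) (j - 2))) k
      + \<Delta> (\<lambda>j. q j * \<Delta> y (j - 1)) k + f k (y k) = 0)
      \<and> y (-1) = 0 \<and> y 0 = 0 \<and> y (int N + 1) = 0 \<and> y (int N + 2) = 0)"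

end

theory Submission
  imports Defs
begin

text \<open>The sign condition on \<open>f\<close> makes every primitive \<open>F(k,\<cdot>)\<close> bounded below, and the
  quadratic part of \<open>J\<close> is at least \<open>c ||y||\<^sup>2\<close> with \<open>2c = \<eta>'(p) p_min - \<eta>(q) q_max > 0\<close>:
  depending on the signs of \<open>p_min\<close> and \<open>q_max\<close> one uses either the Rayleigh bounds
  \<open>||\<Delta>\<^sup>2y||\<^sup>2 \<ge> \<lambda>\<^sub>2 ||y||\<^sup>2\<close>, \<open>||\<Delta>y||\<^sup>2 \<ge> \<lambda>\<^sub>1 ||y||\<^sup>2\<close> or the crude bounds \<open>||\<Delta>\<^sup>2y||\<^sup>2 \<le> 16 ||y||\<^sup>2\<close>,
  \<open>||\<Delta>y||\<^sup>2 \<le> 4 ||y||\<^sup>2\<close>. So \<open>J\<close> is coercive, and being continuous on the finite-dimensional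
  space \<open>E\<close> it attains its minimum there. At the minimiser the directional derivatives of \<open>J\<close>
  along the unit vectors vanish, and these Euler--Lagrange equations are the boundary value
  problem. The same variational argument, applied to \<open>||\<Delta>\<^sup>2y||\<^sup>2 - \<mu> ||y||\<^sup>2\<close> at a minimiser of
  the Rayleigh quotient, shows that its minimum is an eigenvalue of \<open>W\<^sup>TW\<close>, which gives the
  Rayleigh bounds (likewise for \<open>V\<^sup>TV\<close>).\<close>

lemma Fprim_eq_integral_diff:
  assumes f: "continuous_on UNIV (f k)" and "a \<le> 0" and "a \<le> x"
  shows "Fprim f k x = integral {a..x} (f k) - integral {a..0} (f k)"
proof (cases "0 \<le> x")
  case True
  have "integral {a..0} (f k) + integral {0..x} (f k) = integral {a..x} (f k)"
    by (rule Henstock_Kurzweil_Integration.integral_combine)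
      (use assms True in \<open>auto intro: integrable_continuous_real continuous_on_subset[OF f]\<close>)
  then show ?thesis using True by (simp add: Fprim_def)
next
  case False
  have "integral {a..x} (f k) + integral {x..0} (f k) = integral {a..0} (f k)"
    by (rule Henstock_Kurzweil_Integration.integral_combine)
      (use assms False in \<open>auto intro: integrable_continuous_real continuous_on_subset[OF f]\<close>)
  then show ?thesis using False by (simp add: Fprim_def)
qed

lemma has_real_derivative_Fprim:
  assumes f: "continuous_on UNIV (f k)"
  shows "(Fprim f k has_real_derivative f k s) (at s)"
proof -
  define a where "a = min 0 s - 1"
  have "((\<lambda>x. integral {a..x} (f k)) has_real_derivative f k s) (at s within {a..s + 1})"
    by (rule integral_has_real_derivative) (auto simp: a_def intro: continuous_on_subset[OF f])
  moreover have "at s within {a..s + 1} = at s"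
    by (rule at_within_interior) (auto simp: a_def)
  ultimately have "((\<lambda>x. integral {a..x} (f k) - integral {a..0} (f k))
      has_real_derivative f k s) (at s)"
    by (auto intro!: derivative_eq_intros)
  then show ?thesis
  proof (rule has_field_derivative_transform_within_open[where S="{a<..}"])
    show "integral {a..x} (f k) - integral {a..0} (f k) = Fprim f k x" if "x \<in> {a<..}" for x
      using Fprim_eq_integral_diff[of f k a x, OF f] that by (simp add: a_def)
  qed (auto simp: a_def)
qed

lemma continuous_on_Fprim: "continuous_on UNIV (f k) \<Longrightarrow> continuous_on UNIV (Fprim f k)"
  by (meson DERIV_isCont continuous_at_imp_continuous_on has_real_derivative_Fprim)

text \<open>Outside \<open>[-m, m]\<close> the primitive increases away from the origin, so its minimum
  over the compact interval is a global lower bound.\<close>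

lemma Fprim_bounded_below:
  assumes f: "continuous_on UNIV (f k)" and "m > 0"
    and sign: "\<forall>s. \<bar>s\<bar> \<ge> m \<longrightarrow> s * f k s \<ge> 0"
  shows "\<exists>C. \<forall>s. C \<le> Fprim f k s"
proof -
  let ?F = "Fprim f k"
  have "continuous_on {-m..m} ?F"
    using continuous_on_subset[OF continuous_on_Fprim[of f k, OF f]] by blast
  moreover have "{-m..m} \<noteq> {}" using \<open>m > 0\<close> by simp
  ultimately obtain x where x: "\<forall>t\<in>{-m..m}. ?F x \<le> ?F t"
    using continuous_attains_inf[OF compact_Icc] by blast
  have "?F x \<le> ?F s" for s
  proof -
    consider "\<bar>s\<bar> \<le> m" | "m < s" | "s < -m" by linarith
    then show ?thesis
    proof cases
      case 1
      then show ?thesis using x by (simp add: abs_le_iff)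
    next
      case 2
      have "?F m \<le> ?F s"
      proof (rule DERIV_nonneg_imp_nondecreasing[of m s])
        fix t assume "m \<le> t" "t \<le> s"
        with sign \<open>m > 0\<close> have "0 \<le> t * f k t" by simp
        with \<open>m \<le> t\<close> \<open>m > 0\<close> have "0 \<le> f k t" by (simp add: zero_le_mult_iff)
        then show "\<exists>y. (?F has_real_derivative y) (at t) \<and> 0 \<le> y"
          using has_real_derivative_Fprim[of f k, OF f] by blast
      qed (use 2 in simp)
      moreover have "?F x \<le> ?F m" using x[rule_format, of m] \<open>m > 0\<close> by simp
      ultimately show ?thesis by linarith
    next
      case 3
      have "?F (-m) \<le> ?F s"
      proof (rule DERIV_nonpos_imp_nonincreasing[of s "-m"])
        fix t assume "s \<le> t" "t \<le> -m"
        with sign \<open>m > 0\<close> have "0 \<le> t * f k t" by simp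
        with \<open>t \<le> -m\<close> \<open>m > 0\<close> have "f k t \<le> 0" by (simp add: zero_le_mult_iff)
        then show "\<exists>y. (?F has_real_derivative y) (at t) \<and> y \<le> 0"
          using has_real_derivative_Fprim[of f k, OF f] by blast
      qed (use 3 in simp)
      moreover have "?F x \<le> ?F (-m)" using x[rule_format, of "-m"] \<open>m > 0\<close> by simp
      ultimately show ?thesis by linarith
    qed
  qed
  then show ?thesis by blast
qed

definition sqnorm :: "nat \<Rightarrow> (int \<Rightarrow> real) \<Rightarrow> real" where
  "sqnorm N y = (\<Sum>k=1..int N. (y k)\<^sup>2)"

lemma sqnorm_nonneg: "0 \<le> sqnorm N y"
  by (simp add: sqnorm_def sum_nonneg)

lemma square_le_sqnorm: "k \<in> {1..int N} \<Longrightarrow> (y k)\<^sup>2 \<le> sqnorm N y"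
  unfolding sqnorm_def by (rule member_le_sum) auto

lemma ynorm_eq_sqrt_sqnorm: "ynorm N y = sqrt (sqnorm N y)"
  by (simp add: ynorm_def sqnorm_def)

lemma sqnorm_scale: "sqnorm N (\<lambda>k. c * y k) = c\<^sup>2 * sqnorm N y"
  by (simp add: sqnorm_def power_mult_distrib sum_distrib_left)

lemma continuous_on_sqnorm: "continuous_on UNIV (sqnorm N)"
  unfolding sqnorm_def by (intro continuous_intros continuous_on_product_coordinates)

lemma solution_set_vanishes:
  assumes "y \<in> solution_set N" and "k \<notin> {1..int N}"
  shows "y k = 0"
proof -
  have "k < -1 \<or> k > int N + 2 \<or> k \<in> {-1, 0, int N + 1, int N + 2}"
    using assms(2) by auto
  then show ?thesis using assms(1) unfolding solution_set_def by auto
qed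

lemma sqnorm_eq_0_iff:
  assumes "y \<in> solution_set N"
  shows "sqnorm N y = 0 \<longleftrightarrow> y = (\<lambda>_. 0)"
proof
  assume "sqnorm N y = 0"
  then have "(y k)\<^sup>2 \<le> 0" if "k \<in> {1..int N}" for k
    using square_le_sqnorm[OF that, of y] by simp
  then show "y = (\<lambda>_. 0)"
    using solution_set_vanishes[OF assms] by (metis power2_less_eq_zero_iff)
qed (simp add: sqnorm_def)

text \<open>Bounded sets of \<open>E\<close> lie in the compact boxes below (compact for the product topology
  on \<open>int \<Rightarrow> real\<close>), which replaces the finite-dimensionality of \<open>E\<close>.\<close>

definition box :: "nat \<Rightarrow> real \<Rightarrow> (int \<Rightarrow> real) set" where
  "box N R = {y. \<forall>k. y k \<in> (if k \<in> {1..int N} then {-R..R} else {0})}"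

lemma compact_box: "compact (box N R)"
proof -
  let ?S = "\<lambda>k::int. if k \<in> {1..int N} then {-R..R} else {0::real}"
  have "compactin (product_topology (\<lambda>_. euclidean) UNIV) (PiE UNIV ?S)"
    by (subst compactin_PiE) (auto simp: compactin_euclidean_iff)
  moreover have "PiE UNIV ?S = box N R"
    by (auto simp: box_def PiE_def Pi_def)
  ultimately show ?thesis
    by (simp add: euclidean_product_topology compactin_euclidean_iff)
qed

lemma box_subset_solution_set: "box N R \<subseteq> solution_set N"
proof
  fix y assume "y \<in> box N R"
  then have "y k \<in> (if k \<in> {1..int N} then {-R..R} else {0})" for k
    unfolding box_def by blast
  then have "y k = 0" if "k \<notin> {1..int N}" for k
    using that by (metis singletonD)
  then show "y \<in> solution_set N" unfolding solution_set_def by auto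
qed

lemma solution_set_in_box:
  assumes "y \<in> solution_set N" and "\<And>k. k \<in> {1..int N} \<Longrightarrow> \<bar>y k\<bar> \<le> R"
  shows "y \<in> box N R"
  using assms solution_set_vanishes[OF assms(1)] unfolding box_def
  by (auto simp: abs_le_iff) (smt (verit) atLeastAtMost_iff)

lemma abs_le_ynorm: "k \<in> {1..int N} \<Longrightarrow> \<bar>y k\<bar> \<le> ynorm N y"
  unfolding ynorm_eq_sqrt_sqnorm using real_sqrt_le_mono[OF square_le_sqnorm] by simp

lemma coercive_on_attains_min:
  assumes "continuous_on UNIV J" and "coercive_on N J"
  shows "\<exists>y\<in>solution_set N. \<forall>z\<in>solution_set N. J y \<le> J z"
proof -
  obtain R where R: "\<forall>y\<in>solution_set N. ynorm N y > R \<longrightarrow> J y > J (\<lambda>_. 0)"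
    using assms(2) unfolding coercive_on_def by blast
  have zero: "(\<lambda>_. 0) \<in> box N \<bar>R\<bar>" by (auto simp: box_def)
  then obtain y where y: "y \<in> box N \<bar>R\<bar>" "\<forall>z\<in>box N \<bar>R\<bar>. J y \<le> J z"
    using continuous_attains_inf[OF compact_box _ continuous_on_subset[OF assms(1)]] by blast
  have "J y \<le> J z" if z: "z \<in> solution_set N" for z
  proof (cases "ynorm N z > R")
    case True
    then show ?thesis using R z y(2) zero by force
  next
    case False
    then have "z \<in> box N \<bar>R\<bar>"
      by (intro solution_set_in_box[OF z]) (use abs_le_ynorm[of _ N z] in force)
    then show ?thesis using y by auto
  qed
  then show ?thesis using y box_subset_solution_set by blast
qed

lemma homogeneous_attains_min_on_sphere:
  assumes "N \<ge> 1" and "continuous_on UNIV Q" and hom: "\<And>c y. Q (\<lambda>k. c * y k) = c\<^sup>2 * Q y"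
  shows "\<exists>y\<in>solution_set N. sqnorm N y = 1 \<and> (\<forall>z\<in>solution_set N. Q y * sqnorm N z \<le> Q z)"
proof -
  let ?K = "box N 1 \<inter> {y. sqnorm N y = 1}"
  have "compact ?K"
    by (intro compact_Int_closed compact_box closed_Collect_eq continuous_on_sqnorm continuous_on_const)
  moreover have "(\<lambda>k. if k = 1 then 1 else 0) \<in> ?K"
    using \<open>N \<ge> 1\<close> by (auto simp: box_def sqnorm_def if_distrib[of "\<lambda>x. x\<^sup>2"] cong: if_cong)
  ultimately obtain y where y: "y \<in> ?K" "\<forall>z\<in>?K. Q y \<le> Q z"
    using continuous_attains_inf[of ?K Q] continuous_on_subset[OF assms(2)] by blast
  have "Q y * sqnorm N z \<le> Q z" if z: "z \<in> solution_set N" for z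
  proof (cases "sqnorm N z = 0")
    case True
    then have "z = (\<lambda>k. 0 * z k)" using sqnorm_eq_0_iff[OF z] by simp
    then have "Q z = 0" using hom[of 0 z] by simp
    then show ?thesis using True by simp
  next
    case False
    then have pos: "sqnorm N z > 0" using sqnorm_nonneg[of N z] by linarith
    define w where "w = (\<lambda>k. (1 / sqrt (sqnorm N z)) * z k)"
    have w1: "sqnorm N w = 1"
      unfolding w_def sqnorm_scale using pos by (simp add: power_divide)
    have "\<bar>w k\<bar> \<le> 1" if "k \<in> {1..int N}" for k
      using square_le_sqnorm[OF that, of w] w1 abs_le_square_iff[of "w k" 1] by simp
    then have "w \<in> ?K"
      using z w1 solution_set_in_box[of w N 1] by (auto simp: w_def solution_set_def)
    then have "Q y \<le> Q w" using y by auto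
    also have "Q w = Q z / sqnorm N z"
      unfolding w_def hom using pos by (simp add: power_divide)
    finally show ?thesis using pos by (simp add: pos_le_divide_eq)
  qed
  then show ?thesis using y box_subset_solution_set by blast
qed

definition energy :: "nat \<Rightarrow> (int \<Rightarrow> real) \<Rightarrow> (int \<Rightarrow> real) \<Rightarrow> (int \<Rightarrow> real \<Rightarrow> real)
    \<Rightarrow> (int \<Rightarrow> real) \<Rightarrow> real" where
  "energy N p q G y =
     (\<Sum>k=1..int N + 2. p k / 2 * (\<Delta> (\<Delta> y) (k - 2))\<^sup>2)
   - (\<Sum>k=1..int N + 1. q k / 2 * (\<Delta> y (k - 1))\<^sup>2)
   + (\<Sum>k=1..int N. G k (y k))"

lemma Jfun_eq_energy: "Jfun N p q f = energy N p q (Fprim f)"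
  by (simp add: fun_eq_iff Jfun_def energy_def)

definition unit_at :: "int \<Rightarrow> int \<Rightarrow> real" where
  "unit_at j k = (if k = j then 1 else 0)"

lemma unit_at_perturb_in_solution_set:
  "y \<in> solution_set N \<Longrightarrow> j \<in> {1..int N} \<Longrightarrow> (\<lambda>i. y i + t * unit_at j i) \<in> solution_set N"
  by (auto simp: solution_set_def unit_at_def)

lemma fwd_diff_add_scaled: "\<Delta> (\<lambda>i. y i + t * d i) k = \<Delta> y k + t * \<Delta> d k"
  by (simp add: fwd_diff_def algebra_simps)

lemma fwd_diff2_add_scaled: "\<Delta> (\<Delta> (\<lambda>i. y i + t * d i)) k = \<Delta> (\<Delta> y) k + t * \<Delta> (\<Delta> d) k"
  by (simp add: fwd_diff_def algebra_simps)

lemma sum_mult_unit_at: "finite I \<Longrightarrow> (\<Sum>k\<in>I. g k * unit_at j k) = (if j \<in> I then g j else 0)"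
  by (simp add: unit_at_def if_distrib[of "\<lambda>x. _ * x"] sum.delta' cong: if_cong)

lemma sum_mult_fwd_diff_unit_at:
  assumes "j \<in> {1..int N}"
  shows "(\<Sum>k=1..int N + 1. g k * \<Delta> (unit_at j) (k - 1)) = - \<Delta> g j"
proof -
  have "(\<Sum>k=1..int N + 1. g k * \<Delta> (unit_at j) (k - 1))
      = (\<Sum>k=1..int N + 1. g k * unit_at j k) - (\<Sum>k=1..int N + 1. g k * unit_at (j + 1) k)"
    by (simp add: fwd_diff_def unit_at_def algebra_simps sum_subtractf)
  then show ?thesis using assms by (simp add: sum_mult_unit_at fwd_diff_def)
qed

lemma sum_mult_fwd_diff2_unit_at:
  assumes "j \<in> {1..int N}"
  shows "(\<Sum>k=1..int N + 2. g k * \<Delta> (\<Delta> (unit_at j)) (k - 2)) = \<Delta> (\<Delta> g) j"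
proof -
  have "(\<Sum>k=1..int N + 2. g k * \<Delta> (\<Delta> (unit_at j)) (k - 2))
      = (\<Sum>k=1..int N + 2. g k * unit_at j k) - 2 * (\<Sum>k=1..int N + 2. g k * unit_at (j + 1) k)
        + (\<Sum>k=1..int N + 2. g k * unit_at (j + 2) k)"
    by (simp add: fwd_diff_def unit_at_def algebra_simps sum.distrib sum_subtractf sum_distrib_left)
  then show ?thesis using assms by (simp add: sum_mult_unit_at fwd_diff_def add.commute)
qed

lemma has_real_derivative_sum_squares:
  "D = (\<Sum>k\<in>I. 2 * c k * a k * b k) \<Longrightarrow>
    ((\<lambda>t. \<Sum>k\<in>I. c k * (a k + t * b k)\<^sup>2) has_real_derivative D) (at 0)"
  by (auto intro!: DERIV_sum derivative_eq_intros)

lemma has_real_derivative_energy_along_unit_at: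
  assumes G: "\<forall>k\<in>{1..int N}. \<forall>s. (G k has_real_derivative g k s) (at s)"
    and j: "j \<in> {1..int N}"
  shows "((\<lambda>t. energy N p q G (\<lambda>i. y i + t * unit_at j i)) has_real_derivative
     \<Delta> (\<Delta> (\<lambda>i. p i * \<Delta> (\<Delta> y) (i - 2))) j + \<Delta> (\<lambda>i. q i * \<Delta> y (i - 1)) j + g j (y j)) (at 0)"
proof -
  let ?e = "unit_at j"
  have d2: "((\<lambda>t. \<Sum>k=1..int N + 2. p k / 2 * (\<Delta> (\<Delta> y) (k - 2) + t * \<Delta> (\<Delta> ?e) (k - 2))\<^sup>2)
      has_real_derivative \<Delta> (\<Delta> (\<lambda>i. p i * \<Delta> (\<Delta> y) (i - 2))) j) (at 0)"
    by (rule has_real_derivative_sum_squares)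
      (simp add: sum_mult_fwd_diff2_unit_at[OF j, symmetric] mult.assoc)
  have d1: "((\<lambda>t. \<Sum>k=1..int N + 1. q k / 2 * (\<Delta> y (k - 1) + t * \<Delta> ?e (k - 1))\<^sup>2)
      has_real_derivative - \<Delta> (\<lambda>i. q i * \<Delta> y (i - 1)) j) (at 0)"
    by (rule has_real_derivative_sum_squares)
      (simp add: sum_mult_fwd_diff_unit_at[OF j, symmetric] mult.assoc)
  have "((\<lambda>t. \<Sum>k=1..int N. G k (y k + t * ?e k)) has_real_derivative
      (\<Sum>k=1..int N. g k (y k) * ?e k)) (at 0)"
  proof (rule DERIV_sum)
    fix k assume k: "k \<in> {1..int N}"
    have "((\<lambda>t. G k (y k + t * ?e k)) has_real_derivative g k (y k + 0 * ?e k) * ?e k) (at 0)"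
      by (rule DERIV_chain2[OF G[rule_format, OF k]]) (auto intro!: derivative_eq_intros)
    then show "((\<lambda>t. G k (y k + t * ?e k)) has_real_derivative g k (y k) * ?e k) (at 0)"
      by simp
  qed
  then have d0: "((\<lambda>t. \<Sum>k=1..int N. G k (y k + t * ?e k)) has_real_derivative g j (y j)) (at 0)"
    using j by (simp add: sum_mult_unit_at)
  have "((\<lambda>t. energy N p q G (\<lambda>i. y i + t * ?e i)) has_real_derivative
     \<Delta> (\<Delta> (\<lambda>i. p i * \<Delta> (\<Delta> y) (i - 2))) j - - \<Delta> (\<lambda>i. q i * \<Delta> y (i - 1)) j + g j (y j)) (at 0)"
    unfolding energy_def fwd_diff_add_scaled fwd_diff2_add_scaled by (intro DERIV_add DERIV_diff d2 d1 d0)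
  then show ?thesis by (simp only: diff_minus_eq_add)
qed

lemma energy_min_imp_euler_lagrange:
  assumes G: "\<forall>k\<in>{1..int N}. \<forall>s. (G k has_real_derivative g k s) (at s)"
    and y: "y \<in> solution_set N" and min: "\<forall>z\<in>solution_set N. energy N p q G y \<le> energy N p q G z"
    and j: "j \<in> {1..int N}"
  shows "\<Delta> (\<Delta> (\<lambda>i. p i * \<Delta> (\<Delta> y) (i - 2))) j + \<Delta> (\<lambda>i. q i * \<Delta> y (i - 1)) j + g j (y j) = 0"
proof -
  have "energy N p q G (\<lambda>i. y i + 0 * unit_at j i) \<le> energy N p q G (\<lambda>i. y i + t * unit_at j i)" for t
    using min unit_at_perturb_in_solution_set[OF y j] by simp
  then show ?thesis
    using DERIV_local_min[OF has_real_derivative_energy_along_unit_at[OF G j], of 1] by auto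
qed

definition sqnorm_diff :: "nat \<Rightarrow> (int \<Rightarrow> real) \<Rightarrow> real" where
  "sqnorm_diff N y = (\<Sum>k=1..int N + 1. (\<Delta> y (k - 1))\<^sup>2)"

definition sqnorm_diff2 :: "nat \<Rightarrow> (int \<Rightarrow> real) \<Rightarrow> real" where
  "sqnorm_diff2 N y = (\<Sum>k=1..int N + 2. (\<Delta> (\<Delta> y) (k - 2))\<^sup>2)"

lemma fwd_diff_scale: "\<Delta> (\<lambda>k. c * y k) i = c * \<Delta> y i"
  by (simp add: fwd_diff_def algebra_simps)

lemma fwd_diff2_scale: "\<Delta> (\<Delta> (\<lambda>k. c * y k)) i = c * \<Delta> (\<Delta> y) i"
  by (simp add: fwd_diff_def algebra_simps)

lemma sqnorm_diff_scale: "sqnorm_diff N (\<lambda>k. c * y k) = c\<^sup>2 * sqnorm_diff N y"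
  by (simp add: sqnorm_diff_def fwd_diff_scale power_mult_distrib sum_distrib_left)

lemma sqnorm_diff2_scale: "sqnorm_diff2 N (\<lambda>k. c * y k) = c\<^sup>2 * sqnorm_diff2 N y"
  by (simp add: sqnorm_diff2_def fwd_diff2_scale power_mult_distrib sum_distrib_left)

lemma continuous_on_sqnorm_diff: "continuous_on UNIV (sqnorm_diff N)"
  unfolding sqnorm_diff_def fwd_diff_def
  by (intro continuous_intros continuous_on_product_coordinates)

lemma continuous_on_sqnorm_diff2: "continuous_on UNIV (sqnorm_diff2 N)"
  unfolding sqnorm_diff2_def fwd_diff_def
  by (intro continuous_intros continuous_on_product_coordinates)

lemma energy_quadratic:
  "energy N (\<lambda>_. a) (\<lambda>_. b) (\<lambda>_ s. c * s\<^sup>2) y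
    = a / 2 * sqnorm_diff2 N y - b / 2 * sqnorm_diff N y + c * sqnorm N y"
  by (simp add: energy_def sqnorm_def sqnorm_diff_def sqnorm_diff2_def sum_distrib_left)

lemma square_diff_le: "((a::real) - b)\<^sup>2 \<le> 2 * a\<^sup>2 + 2 * b\<^sup>2"
  using zero_le_power2[of "a + b"] unfolding power2_diff power2_sum by linarith

lemma sum_shift_of_vanishing:
  fixes h :: "int \<Rightarrow> 'a::comm_monoid_add"
  assumes "\<And>k. k \<notin> {lo..hi} \<Longrightarrow> h k = 0" and "a - c \<le> lo" and "hi \<le> b - c"
  shows "(\<Sum>k=a..b. h (k - c)) = (\<Sum>k=lo..hi. h k)"
proof -
  have "(\<Sum>k=a..b. h (k - c)) = (\<Sum>k=a - c..b - c. h k)"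
    by (rule sum.reindex_bij_witness[of _ "\<lambda>k. k + c" "\<lambda>k. k - c"]) auto
  also have "\<dots> = (\<Sum>k=lo..hi. h k)"
    by (rule sum.mono_neutral_right) (use assms in auto)
  finally show ?thesis .
qed

lemma fwd_diff_vanishes:
  assumes "y \<in> solution_set N" and "k \<notin> {0..int N}"
  shows "\<Delta> y k = 0"
proof -
  have "k \<notin> {1..int N}" "k + 1 \<notin> {1..int N}" using assms(2) by auto
  then show ?thesis using solution_set_vanishes[OF assms(1)] by (simp add: fwd_diff_def)
qed

lemma sqnorm_diff_le:
  assumes y: "y \<in> solution_set N"
  shows "sqnorm_diff N y \<le> 4 * sqnorm N y"
proof -
  have "sqnorm_diff N y \<le> (\<Sum>k=1..int N + 1. 2 * (y (k - 0))\<^sup>2 + 2 * (y (k - 1))\<^sup>2)"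
    unfolding sqnorm_diff_def fwd_diff_def by (intro sum_mono) (simp add: square_diff_le)
  also have "\<dots> = 2 * (\<Sum>k=1..int N + 1. (y (k - 0))\<^sup>2) + 2 * (\<Sum>k=1..int N + 1. (y (k - 1))\<^sup>2)"
    by (simp add: sum.distrib sum_distrib_left)
  also have "\<dots> = 4 * sqnorm N y"
  proof -
    have shift: "(\<Sum>k=1..int N + 1. (y (k - c))\<^sup>2) = sqnorm N y" if "c \<in> {0, 1}" for c
      unfolding sqnorm_def
      by (rule sum_shift_of_vanishing[where h="\<lambda>k. (y k)\<^sup>2"])
        (use that solution_set_vanishes[OF y] in auto)
    show ?thesis using shift[of 0] shift[of 1] by simp
  qed
  finally show ?thesis .
qed

lemma sqnorm_diff2_le:
  assumes y: "y \<in> solution_set N"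
  shows "sqnorm_diff2 N y \<le> 4 * sqnorm_diff N y"
proof -
  have "sqnorm_diff2 N y \<le> (\<Sum>k=1..int N + 2. 2 * (\<Delta> y (k - 1))\<^sup>2 + 2 * (\<Delta> y (k - 2))\<^sup>2)"
    unfolding sqnorm_diff2_def
  proof (intro sum_mono)
    fix k :: int
    have "\<Delta> (\<Delta> y) (k - 2) = \<Delta> y (k - 1) - \<Delta> y (k - 2)" by (simp add: fwd_diff_def)
    then show "(\<Delta> (\<Delta> y) (k - 2))\<^sup>2 \<le> 2 * (\<Delta> y (k - 1))\<^sup>2 + 2 * (\<Delta> y (k - 2))\<^sup>2"
      by (simp add: square_diff_le)
  qed
  also have "\<dots> = 2 * (\<Sum>k=1..int N + 2. (\<Delta> y (k - 1))\<^sup>2) + 2 * (\<Sum>k=1..int N + 2. (\<Delta> y (k - 2))\<^sup>2)"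
    by (simp add: sum.distrib sum_distrib_left)
  also have "\<dots> = 4 * sqnorm_diff N y"
  proof -
    have shift: "(\<Sum>k=a..int N + b. (\<Delta> y (k - c))\<^sup>2) = (\<Sum>k=0..int N. (\<Delta> y k)\<^sup>2)"
      if "a - c \<le> 0" "int N \<le> int N + b - c" for a b c
      by (rule sum_shift_of_vanishing[where h="\<lambda>k. (\<Delta> y k)\<^sup>2"])
        (use that fwd_diff_vanishes[OF y] in auto)
    have "sqnorm_diff N y = (\<Sum>k=0..int N. (\<Delta> y k)\<^sup>2)"
      using shift[where a=1 and b=1 and c=1] by (simp add: sqnorm_diff_def)
    moreover have "(\<Sum>k=1..int N + 2. (\<Delta> y (k - 1))\<^sup>2) = (\<Sum>k=0..int N. (\<Delta> y k)\<^sup>2)"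
      using shift[where a=1 and b=2 and c=1] by simp
    moreover have "(\<Sum>k=1..int N + 2. (\<Delta> y (k - 2))\<^sup>2) = (\<Sum>k=0..int N. (\<Delta> y k)\<^sup>2)"
      using shift[where a=1 and b=2 and c=2] by simp
    ultimately show ?thesis by linarith
  qed
  finally show ?thesis .
qed

lemma sqnorm_diff_rayleigh_min_imp_eigen_equation:
  assumes y: "y \<in> solution_set N" and "sqnorm N y = 1"
    and min: "\<forall>z\<in>solution_set N. sqnorm_diff N y * sqnorm N z \<le> sqnorm_diff N z"
    and j: "j \<in> {1..int N}"
  shows "\<Delta> y (j - 1) - \<Delta> y j = sqnorm_diff N y * y j"
proof -
  let ?c = "- sqnorm_diff N y / 2"
  have G: "\<forall>k\<in>{1..int N}. \<forall>s. ((\<lambda>s. ?c * s\<^sup>2) has_real_derivative 2 * ?c * s) (at s)"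
    by (auto intro!: derivative_eq_intros)
  have "\<forall>z\<in>solution_set N. energy N (\<lambda>_. 0) (\<lambda>_. -1) (\<lambda>_ s. ?c * s\<^sup>2) y
      \<le> energy N (\<lambda>_. 0) (\<lambda>_. -1) (\<lambda>_ s. ?c * s\<^sup>2) z"
    unfolding energy_quadratic using min \<open>sqnorm N y = 1\<close> by (simp add: algebra_simps)
  from energy_min_imp_euler_lagrange[OF G y this j] show ?thesis
    by (simp add: fwd_diff_def)
qed

lemma sqnorm_diff2_rayleigh_min_imp_eigen_equation:
  assumes y: "y \<in> solution_set N" and "sqnorm N y = 1"
    and min: "\<forall>z\<in>solution_set N. sqnorm_diff2 N y * sqnorm N z \<le> sqnorm_diff2 N z"
    and j: "j \<in> {1..int N}"
  shows "\<Delta> (\<Delta> (\<lambda>i. \<Delta> (\<Delta> y) (i - 2))) j = sqnorm_diff2 N y * y j"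
proof -
  let ?c = "- sqnorm_diff2 N y / 2"
  have G: "\<forall>k\<in>{1..int N}. \<forall>s. ((\<lambda>s. ?c * s\<^sup>2) has_real_derivative 2 * ?c * s) (at s)"
    by (auto intro!: derivative_eq_intros)
  have "\<forall>z\<in>solution_set N. energy N (\<lambda>_. 1) (\<lambda>_. 0) (\<lambda>_ s. ?c * s\<^sup>2) y
      \<le> energy N (\<lambda>_. 1) (\<lambda>_. 0) (\<lambda>_ s. ?c * s\<^sup>2) z"
    unfolding energy_quadratic using min \<open>sqnorm N y = 1\<close> by (simp add: algebra_simps)
  from energy_min_imp_euler_lagrange[OF G y this j] show ?thesis
    by (simp add: fwd_diff_def)
qed

definition coords :: "nat \<Rightarrow> (int \<Rightarrow> real) \<Rightarrow> real vec" where
  "coords N y = vec N (\<lambda>i. y (int i + 1))"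

lemma coords_carrier [simp]: "coords N y \<in> carrier_vec N"
  by (simp add: coords_def)

lemma sum_shifted_delta:
  fixes h :: "nat \<Rightarrow> real"
  shows "(\<Sum>c\<in>{0..<N}. (if c + d = r then 1 else 0) * h c)
    = (if d \<le> r \<and> r < N + d then h (r - d) else 0)"
proof -
  have "(\<Sum>c\<in>{0..<N}. (if c + d = r then 1 else 0) * h c)
      = (\<Sum>c\<in>{0..<N}. if c = r - d then (if d \<le> r then h c else 0) else 0)"
    by (rule sum.cong) auto
  then show ?thesis by (auto simp: sum.delta)
qed

lemma sum_shifted_delta':
  fixes h :: "nat \<Rightarrow> real"
  shows "(\<Sum>r\<in>{0..<M}. (if c + d = r then 1 else 0) * h r) = (if c + d < M then h (c + d) else 0)"
  by (simp add: if_distrib[of "\<lambda>x. x * _"] sum.delta cong: if_cong)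

lemma shifted_coord_eq:
  assumes "y \<in> solution_set N"
  shows "(if d \<le> r \<and> r < N + d then y (int (r - d) + 1) else 0) = y (int r - int d + 1)"
proof (cases "d \<le> r \<and> r < N + d")
  case False
  then have "int r - int d + 1 \<notin> {1..int N}" by auto
  then show ?thesis using False solution_set_vanishes[OF assms] by simp
qed (simp add: of_nat_diff)

lemma Wmat_mult_coords:
  assumes y: "y \<in> solution_set N" and r: "r < N + 2"
  shows "(Wmat N *\<^sub>v coords N y) $ r = \<Delta> (\<Delta> y) (int r - 1)"
proof -
  let ?h = "\<lambda>i. y (int i + 1)"
  have "(Wmat N *\<^sub>v coords N y) $ r = (\<Sum>c\<in>{0..<N}. Wmat N $$ (r, c) * ?h c)"
    using r by (simp add: Wmat_def coords_def scalar_prod_def)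
  also have "\<dots> = (\<Sum>c\<in>{0..<N}. (if c + 0 = r then 1 else 0) * ?h c)
      - 2 * (\<Sum>c\<in>{0..<N}. (if c + 1 = r then 1 else 0) * ?h c)
      + (\<Sum>c\<in>{0..<N}. (if c + 2 = r then 1 else 0) * ?h c)"
    using r by (simp add: Wmat_def sum.distrib sum_subtractf sum_distrib_left algebra_simps)
  also have "\<dots> = y (int r + 1) - 2 * y (int r) + y (int r - 1)"
    unfolding sum_shifted_delta shifted_coord_eq[OF y] by simp
  finally show ?thesis by (simp add: fwd_diff_def)
qed

lemma Vmat_mult_coords:
  assumes y: "y \<in> solution_set N" and r: "r < N + 1"
  shows "(Vmat N *\<^sub>v coords N y) $ r = \<Delta> y (int r)"
proof -
  let ?h = "\<lambda>i. y (int i + 1)"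
  have "(Vmat N *\<^sub>v coords N y) $ r = (\<Sum>c\<in>{0..<N}. Vmat N $$ (r, c) * ?h c)"
    using r by (simp add: Vmat_def coords_def scalar_prod_def)
  also have "\<dots> = (\<Sum>c\<in>{0..<N}. (if c + 0 = r then 1 else 0) * ?h c)
      - (\<Sum>c\<in>{0..<N}. (if c + 1 = r then 1 else 0) * ?h c)"
    using r by (simp add: Vmat_def sum_subtractf algebra_simps)
  also have "\<dots> = y (int r + 1) - y (int r)"
    unfolding sum_shifted_delta shifted_coord_eq[OF y] by simp
  finally show ?thesis by (simp add: fwd_diff_def)
qed

lemma transpose_Wmat_mult_vec:
  assumes u: "u \<in> carrier_vec (N + 2)" and c: "c < N"
  shows "(transpose_mat (Wmat N) *\<^sub>v u) $ c = u $ c - 2 * u $ (c + 1) + u $ (c + 2)"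
proof -
  have "(transpose_mat (Wmat N) *\<^sub>v u) $ c = (\<Sum>r\<in>{0..<N + 2}. Wmat N $$ (r, c) * u $ r)"
    using c u by (simp add: Wmat_def scalar_prod_def)
  also have "\<dots> = (\<Sum>r\<in>{0..<N + 2}. (if c + 0 = r then 1 else 0) * u $ r)
      - 2 * (\<Sum>r\<in>{0..<N + 2}. (if c + 1 = r then 1 else 0) * u $ r)
      + (\<Sum>r\<in>{0..<N + 2}. (if c + 2 = r then 1 else 0) * u $ r)"
    using c by (simp add: Wmat_def sum.distrib sum_subtractf sum_distrib_left algebra_simps)
  finally show ?thesis using c unfolding sum_shifted_delta' by simp
qed

lemma transpose_Vmat_mult_vec:
  assumes u: "u \<in> carrier_vec (N + 1)" and c: "c < N"
  shows "(transpose_mat (Vmat N) *\<^sub>v u) $ c = u $ c - u $ (c + 1)"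
proof -
  have "(transpose_mat (Vmat N) *\<^sub>v u) $ c = (\<Sum>r\<in>{0..<N + 1}. Vmat N $$ (r, c) * u $ r)"
    using c u by (simp add: Vmat_def scalar_prod_def)
  also have "\<dots> = (\<Sum>r\<in>{0..<N + 1}. (if c + 0 = r then 1 else 0) * u $ r)
      - (\<Sum>r\<in>{0..<N + 1}. (if c + 1 = r then 1 else 0) * u $ r)"
    using c by (simp add: Vmat_def sum_subtractf algebra_simps)
  finally show ?thesis using c unfolding sum_shifted_delta' by simp
qed

lemma Wmat_carrier: "Wmat N \<in> carrier_mat (N + 2) N"
  by (simp add: Wmat_def)

lemma Vmat_carrier: "Vmat N \<in> carrier_mat (N + 1) N"
  by (simp add: Vmat_def)

lemma WtW_mult_coords:
  assumes y: "y \<in> solution_set N" and c: "c < N"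
  shows "((transpose_mat (Wmat N) * Wmat N) *\<^sub>v coords N y) $ c
    = \<Delta> (\<Delta> (\<lambda>i. \<Delta> (\<Delta> y) (i - 2))) (int c + 1)"
proof -
  have "(transpose_mat (Wmat N) * Wmat N) *\<^sub>v coords N y
      = transpose_mat (Wmat N) *\<^sub>v (Wmat N *\<^sub>v coords N y)"
    using Wmat_carrier[of N] by (intro assoc_mult_mat_vec) (auto simp: coords_def)
  then show ?thesis
    using c Wmat_carrier[of N]
    by (simp del: index_mult_mat_vec add: transpose_Wmat_mult_vec Wmat_mult_coords[OF y])
      (simp add: fwd_diff_def add.commute)
qed

lemma VtV_mult_coords:
  assumes y: "y \<in> solution_set N" and c: "c < N"
  shows "((transpose_mat (Vmat N) * Vmat N) *\<^sub>v coords N y) $ c = \<Delta> y (int c) - \<Delta> y (int c + 1)"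
proof -
  have "(transpose_mat (Vmat N) * Vmat N) *\<^sub>v coords N y
      = transpose_mat (Vmat N) *\<^sub>v (Vmat N *\<^sub>v coords N y)"
    using Vmat_carrier[of N] by (intro assoc_mult_mat_vec) (auto simp: coords_def)
  then show ?thesis
    using c Vmat_carrier[of N]
    by (simp del: index_mult_mat_vec add: transpose_Vmat_mult_vec Vmat_mult_coords[OF y] add.commute)
qed

lemma eigenvalue_of_coords:
  assumes "A \<in> carrier_mat N N" and "sqnorm N y \<noteq> 0"
    and eq: "\<forall>c<N. (A *\<^sub>v coords N y) $ c = \<mu> * y (int c + 1)"
  shows "eigenvalue A \<mu>"
proof -
  have "coords N y \<noteq> 0\<^sub>v N"
  proof
    assume "coords N y = 0\<^sub>v N"
    have "y k = 0" if "k \<in> {1..int N}" for k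
    proof -
      have "nat k - 1 < N" using that by auto
      then have "coords N y $ (nat k - 1) = 0" using \<open>coords N y = 0\<^sub>v N\<close> by simp
      moreover have "int (nat k - 1) + 1 = k" using that by auto
      ultimately show ?thesis using that by (simp add: coords_def)
    qed
    then show False using assms(2) by (simp add: sqnorm_def)
  qed
  moreover have "A *\<^sub>v coords N y = \<mu> \<cdot>\<^sub>v coords N y"
    using assms(1) eq by (intro eq_vecI) (auto simp: coords_def)
  ultimately show ?thesis
    using assms(1) unfolding eigenvalue_def eigenvector_def by (intro exI[of _ "coords N y"]) auto
qed

lemma finite_eigenvalues:
  fixes A :: "real mat"
  assumes "A \<in> carrier_mat n n"
  shows "finite {l. eigenvalue A l}"
proof -
  have "char_poly A \<noteq> 0" using degree_monic_char_poly[OF assms] by auto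
  then show ?thesis using poly_roots_finite eigenvalue_root_char_poly[OF assms] by simp
qed

lemma smallest_eigenvalue_le_rayleigh:
  assumes "N \<ge> 1" and "continuous_on UNIV Q" and "\<And>c y. Q (\<lambda>k. c * y k) = c\<^sup>2 * Q y"
    and A: "A \<in> carrier_mat N N"
    and eigen: "\<And>y. y \<in> solution_set N \<Longrightarrow> sqnorm N y = 1
      \<Longrightarrow> \<forall>z\<in>solution_set N. Q y * sqnorm N z \<le> Q z \<Longrightarrow> eigenvalue A (Q y)"
    and z: "z \<in> solution_set N"
  shows "smallest_eigenvalue A * sqnorm N z \<le> Q z"
proof -
  obtain y where y: "y \<in> solution_set N" "sqnorm N y = 1"
    and min: "\<forall>z\<in>solution_set N. Q y * sqnorm N z \<le> Q z"
    using homogeneous_attains_min_on_sphere[OF assms(1-3)] by blast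
  have "smallest_eigenvalue A \<le> Q y"
    unfolding smallest_eigenvalue_def using eigen[OF y min] finite_eigenvalues[OF A] by simp
  then have "smallest_eigenvalue A * sqnorm N z \<le> Q y * sqnorm N z"
    by (rule mult_right_mono) (rule sqnorm_nonneg)
  also have "\<dots> \<le> Q z" using min z by blast
  finally show ?thesis .
qed

lemma lambda1_sqnorm_le:
  assumes "N \<ge> 1" and "z \<in> solution_set N"
  shows "lambda1 N * sqnorm N z \<le> sqnorm_diff N z"
  unfolding lambda1_def
proof (rule smallest_eigenvalue_le_rayleigh[OF assms(1) continuous_on_sqnorm_diff sqnorm_diff_scale _ _ assms(2)])
  show "transpose_mat (Vmat N) * Vmat N \<in> carrier_mat N N"
    using Vmat_carrier[of N] by simp
  fix y assume y: "y \<in> solution_set N" and unit: "sqnorm N y = 1"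
    and min: "\<forall>z\<in>solution_set N. sqnorm_diff N y * sqnorm N z \<le> sqnorm_diff N z"
  have eigen: "((transpose_mat (Vmat N) * Vmat N) *\<^sub>v coords N y) $ c = sqnorm_diff N y * y (int c + 1)"
    if "c < N" for c
    using VtV_mult_coords[OF y that] sqnorm_diff_rayleigh_min_imp_eigen_equation[OF y unit min, of "int c + 1"]
      that by simp
  show "eigenvalue (transpose_mat (Vmat N) * Vmat N) (sqnorm_diff N y)"
    by (rule eigenvalue_of_coords[where y = y]) (use unit Vmat_carrier[of N] eigen in auto)
qed

lemma lambda2_sqnorm_le:
  assumes "N \<ge> 1" and "z \<in> solution_set N"
  shows "lambda2 N * sqnorm N z \<le> sqnorm_diff2 N z"
  unfolding lambda2_def
proof (rule smallest_eigenvalue_le_rayleigh[OF assms(1) continuous_on_sqnorm_diff2 sqnorm_diff2_scale _ _ assms(2)])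
  show "transpose_mat (Wmat N) * Wmat N \<in> carrier_mat N N"
    using Wmat_carrier[of N] by simp
  fix y assume y: "y \<in> solution_set N" and unit: "sqnorm N y = 1"
    and min: "\<forall>z\<in>solution_set N. sqnorm_diff2 N y * sqnorm N z \<le> sqnorm_diff2 N z"
  have eigen: "((transpose_mat (Wmat N) * Wmat N) *\<^sub>v coords N y) $ c = sqnorm_diff2 N y * y (int c + 1)"
    if "c < N" for c
    using WtW_mult_coords[OF y that] sqnorm_diff2_rayleigh_min_imp_eigen_equation[OF y unit min, of "int c + 1"]
      that by simp
  show "eigenvalue (transpose_mat (Wmat N) * Wmat N) (sqnorm_diff2 N y)"
    by (rule eigenvalue_of_coords[where y = y]) (use unit Wmat_carrier[of N] eigen in auto)
qed

lemma continuous_on_Jfun: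
  assumes "\<forall>k\<in>{1..int N}. continuous_on UNIV (f k)"
  shows "continuous_on UNIV (Jfun N p q f)"
proof -
  have "continuous_on UNIV (\<lambda>y. Fprim f k (y k))" if "k \<in> {1..int N}" for k
    by (rule continuous_on_compose2[OF continuous_on_Fprim continuous_on_product_coordinates])
      (use assms that in auto)
  then show ?thesis
    unfolding Jfun_def fwd_diff_def
    by (intro continuous_intros continuous_on_product_coordinates) auto
qed

lemma coercive_on_quadratic_lower_bound:
  assumes "a > 0" and "\<forall>y\<in>solution_set N. a * sqnorm N y + C \<le> J y"
  shows "coercive_on N J"
  unfolding coercive_on_def
proof
  fix M
  have "M < J y" if y: "y \<in> solution_set N" and "sqrt (\<bar>M - C\<bar> / a) < ynorm N y" for y
  proof -
    have "\<bar>M - C\<bar> / a < sqnorm N y"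
      using that \<open>a > 0\<close> by (simp add: ynorm_eq_sqrt_sqnorm)
    then have "\<bar>M - C\<bar> < a * sqnorm N y"
      using \<open>a > 0\<close> by (simp add: divide_less_eq mult.commute)
    then show ?thesis using assms(2) y by fastforce
  qed
  then show "\<exists>R. \<forall>y\<in>solution_set N. R < ynorm N y \<longrightarrow> M < J y" by blast
qed

lemma eta'_pmin_sqnorm_le:
  assumes "N \<ge> 1" and "y \<in> solution_set N"
  shows "eta' N p * pmin N p * sqnorm N y \<le> pmin N p * sqnorm_diff2 N y"
proof (cases "pmin N p \<ge> 0")
  case True
  then show ?thesis
    using mult_left_mono[OF lambda2_sqnorm_le[OF assms] True] by (simp add: eta'_def mult_ac)
next
  case False
  have "sqnorm_diff2 N y \<le> 16 * sqnorm N y"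
    using sqnorm_diff2_le[OF assms(2)] sqnorm_diff_le[OF assms(2)] by linarith
  then show ?thesis
    using mult_left_mono_neg[of _ _ "pmin N p"] False by (simp add: eta'_def mult_ac)
qed

lemma qmax_sqnorm_diff_le:
  assumes "N \<ge> 1" and "y \<in> solution_set N"
  shows "qmax N q * sqnorm_diff N y \<le> eta N q * qmax N q * sqnorm N y"
proof (cases "qmax N q < 0")
  case True
  then show ?thesis
    using mult_left_mono_neg[OF lambda1_sqnorm_le[OF assms], of "qmax N q"] by (simp add: eta_def mult_ac)
next
  case False
  then show ?thesis
    using mult_left_mono[OF sqnorm_diff_le[OF assms(2)], of "qmax N q"] by (simp add: eta_def mult_ac)
qed

lemma Jfun_lower_bound:
  assumes "N \<ge> 1" and y: "y \<in> solution_set N" and C: "\<forall>k\<in>{1..int N}. \<forall>s. C k \<le> Fprim f k s"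
  shows "(eta' N p * pmin N p - eta N q * qmax N q) / 2 * sqnorm N y + (\<Sum>k=1..int N. C k)
    \<le> Jfun N p q f y"
proof -
  have "pmin N p / 2 * sqnorm_diff2 N y \<le> (\<Sum>k=1..int N + 2. p k / 2 * (\<Delta> (\<Delta> y) (k - 2))\<^sup>2)"
    unfolding sqnorm_diff2_def sum_distrib_left pmin_def
    by (intro sum_mono mult_right_mono) (auto intro: Min_le)
  moreover have "(\<Sum>k=1..int N + 1. q k / 2 * (\<Delta> y (k - 1))\<^sup>2) \<le> qmax N q / 2 * sqnorm_diff N y"
    unfolding sqnorm_diff_def sum_distrib_left qmax_def
    by (intro sum_mono mult_right_mono) (auto intro: Max_ge)
  moreover have "(\<Sum>k=1..int N. C k) \<le> (\<Sum>k=1..int N. Fprim f k (y k))"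
    using C by (intro sum_mono) auto
  ultimately show ?thesis
    using eta'_pmin_sqnorm_le[OF assms(1,2), of p] qmax_sqnorm_diff_le[OF assms(1,2), of q]
    unfolding Jfun_def by (simp add: field_simps)
qed

theorem theorem3:
  fixes N :: nat and f :: "int \<Rightarrow> real \<Rightarrow> real" and p q :: "int \<Rightarrow> real"
  assumes "N \<ge> 1"
    and "\<forall>k \<in> {1..int N}. continuous_on UNIV (f k)"
    and "\<exists>m > 0. \<forall>k \<in> {1..int N}. \<forall>s. \<bar>s\<bar> \<ge> m \<longrightarrow> s * f k s \<ge> 0"
    and "eta' N p * pmin N p - eta N q * qmax N q > 0"
  shows "coercive_on N (Jfun N p q f)
    \<and> (\<exists>y. is_solution N p q f y
           \<and> ((\<exists>k0 \<in> {1..int N}. f k0 0 \<noteq> 0) \<longrightarrow> (\<exists>k \<in> {-1..int N + 2}. y k \<noteq> 0)))"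
proof -
  obtain m where "m > 0" and "\<forall>k \<in> {1..int N}. \<forall>s. \<bar>s\<bar> \<ge> m \<longrightarrow> s * f k s \<ge> 0"
    using assms(3) by blast
  then have "\<forall>k\<in>{1..int N}. \<exists>C. \<forall>s. C \<le> Fprim f k s"
    using Fprim_bounded_below assms(2) by blast
  then obtain C where C: "\<forall>k\<in>{1..int N}. \<forall>s. C k \<le> Fprim f k s"
    by metis
  have coercive: "coercive_on N (Jfun N p q f)"
    using Jfun_lower_bound[OF assms(1) _ C] assms(4)
    by (intro coercive_on_quadratic_lower_bound[of "(eta' N p * pmin N p - eta N q * qmax N q) / 2"]) auto
  obtain y where y: "y \<in> solution_set N"
    and min: "\<forall>z\<in>solution_set N. Jfun N p q f y \<le> Jfun N p q f z"
    using coercive_on_attains_min[OF continuous_on_Jfun[OF assms(2)] coercive] by blast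
  have euler_lagrange: "\<Delta> (\<Delta> (\<lambda>j. p j * \<Delta> (\<Delta> y) (j - 2))) k + \<Delta> (\<lambda>j. q j * \<Delta> y (j - 1)) k
      + f k (y k) = 0" if "k \<in> {1..int N}" for k
    by (rule energy_min_imp_euler_lagrange[OF _ y _ that])
      (use has_real_derivative_Fprim assms(2) min in \<open>simp_all add: Jfun_eq_energy\<close>)
  then have "is_solution N p q f y"
    using y by (simp add: is_solution_def solution_set_def)
  moreover have "\<exists>k \<in> {-1..int N + 2}. y k \<noteq> 0" if "k0 \<in> {1..int N}" "f k0 0 \<noteq> 0" for k0
  proof (rule ccontr)
    assume "\<not> ?thesis"
    then have "y = (\<lambda>_. 0)"
      using solution_set_vanishes[OF y] by fastforce
    then show False using euler_lagrange[OF that(1)] that(2) by (simp add: fwd_diff_def)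
  qed
  ultimately show ?thesis using coercive by blast
qed

end
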